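(* Let $(\mathcal{X},\rho,\nu)$ be a bounded length space with a doubling metric $\rho$ and finite Borel measure $\nu$. Let $\eta\in\mathcal{F}_0$, and let $\mathbb{X}=(X_n)_{n\ge0}$ be a $\sigma$-smoothed process with respect to $\nu$ for some $\sigma>0$. Suppose the boundary $\partial_\eta\mathcal{X}$ has box-counting dimension $\mathfrak{b}>1$ and Minkowski content $\mathfrak{m}$. Then for any $c_1,c_2,p>0$ there exist constants $C_0,C_1>0$ such that, for any nearest neighbor process $(\tilde X_n)_{n\ge1}$, with probability at least $1-p$ the following holds simultaneously for all $N\in\mathbb{N}$: \[\sum_{n=1}^N\mathbb{1}\{\eta(X_n)\ne\eta(\tilde X_n)\}\le C_0+C_1\left(\frac{(\mathfrak{m}+c_2)N}{\sigma}\right)^{(\mathfrak{b}+c_1)/(\mathfrak{b}+1)}.\]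
   Context: A metric space is a length space if $\rho(x,x')=\inf_\gamma\ell(\gamma)$ over continuous paths $\gamma:[0,1]\to\mathcal{X}$ from $x$ to $x'$, with $\ell(\gamma)$ the length of $\gamma$. A metric is doubling if for some $d$ every open ball $B(x,r)$ can be covered by $2^d$ balls of radius $r/2$. $\mathrm{margin}_\eta(x)=\inf\{\rho(x,x'):\eta(x')\ne\eta(x)\}$, $\partial_\eta\mathcal{X}=\{x:\mathrm{margin}_\eta(x)=0\}$, and $\mathcal{F}_0$ is the set of measurable $\eta$ with $\nu(\partial_\eta\mathcal{X})=0$. $\mathbb{X}$ is $\sigma$-smoothed if $\Pr(X_n\in A\mid X_0,\dots,X_{n-1})\le\sigma^{-1}\nu(A)$ for all $n$ and all measurable $A$. A nearest neighbor process is any $(\tilde X_n)_{n\ge1}$ with $\tilde X_n\in\arg\min_{x\in\{X_0,\dots,X_{n-1}\}}\rho(X_n,x)$. For $A\subset\mathcal{X}$, $\mathcal{N}_r(A)$ is the minimal number of open balls of radius $r$ covering $A$; the (upper) box-counting dimension is $\mathfrak{b}(A)=\limsup_{r\to0}\frac{\log\mathcal{N}_r(A)}{\log(1/r)}$. The $r$-expansion is $A^r=\bigcup_{x\in A}B(x,r)$, and the (upper) Minkowski content is $\mathfrak{m}(A)=\limsup_{r\to0}\frac{\nu(A^r)-\nu(A)}{r}$. *)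

theory Defs
  imports "HOL-Analysis.Analysis" "HOL-Probability.Probability"
begin

definition path_len :: "(real \<Rightarrow> 'a::metric_space) \<Rightarrow> ereal" where
  "path_len \<gamma> = (SUP tn \<in> {(t, n). t 0 = 0 \<and> t n = 1 \<and> (\<forall>i<n. t i \<le> t (Suc i))}.
       ereal (\<Sum>i<snd tn. dist (\<gamma> (fst tn i)) (\<gamma> (fst tn (Suc i)))))"

definition length_space :: "'a::metric_space itself \<Rightarrow> bool" where
  "length_space _ \<longleftrightarrow> (\<forall>x x'::'a. ereal (dist x x') =
      (INF \<gamma> \<in> {\<gamma>. continuous_on {0..1} \<gamma> \<and> \<gamma> 0 = x \<and> \<gamma> 1 = x'}. path_len \<gamma>))"

definition doubling_metric :: "'a::metric_space itself \<Rightarrow> bool" where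
  "doubling_metric _ \<longleftrightarrow> (\<exists>d::nat. \<forall>(x::'a) r. \<exists>C. finite C \<and> card C \<le> 2 ^ d \<and>
      ball x r \<subseteq> (\<Union>c\<in>C. ball c (r / 2)))"

text \<open>margin with the convention inf of the empty set = +infinity\<close>
definition margin :: "('a::metric_space \<Rightarrow> 'b) \<Rightarrow> 'a \<Rightarrow> ereal" where
  "margin \<eta> x = (INF x' \<in> {x'. \<eta> x' \<noteq> \<eta> x}. ereal (dist x x'))"

definition boundary :: "('a::metric_space \<Rightarrow> 'b) \<Rightarrow> 'a set" where
  "boundary \<eta> = {x. margin \<eta> x = 0}"

definition F0 :: "'a::metric_space measure \<Rightarrow> ('a \<Rightarrow> 'b) set" where
  "F0 \<nu> = {\<eta>. \<eta> \<in> measurable \<nu> (count_space UNIV) \<and> boundary \<eta> \<in> null_sets \<nu>}"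

definition past_algebra :: "'w measure \<Rightarrow> (nat \<Rightarrow> 'w \<Rightarrow> 'a::metric_space) \<Rightarrow> nat \<Rightarrow> 'w measure" where
  "past_algebra M X n = sigma (space M) {X i -` B \<inter> space M | i B. i < n \<and> B \<in> sets borel}"

definition smoothed :: "'w measure \<Rightarrow> 'a::metric_space measure \<Rightarrow> real \<Rightarrow> (nat \<Rightarrow> 'w \<Rightarrow> 'a) \<Rightarrow> bool" where
  "smoothed M \<nu> \<sigma> X \<longleftrightarrow> (\<forall>n. \<forall>A \<in> sets \<nu>.
      AE \<omega> in M. real_cond_exp M (past_algebra M X n) (\<lambda>\<omega>. indicator A (X n \<omega>)) \<omega>
                  \<le> measure \<nu> A / \<sigma>)"

definition nn_process :: "(nat \<Rightarrow> 'w \<Rightarrow> 'a::metric_space) \<Rightarrow> (nat \<Rightarrow> 'w \<Rightarrow> 'a) \<Rightarrow> bool" where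
  "nn_process X Xt \<longleftrightarrow> (\<forall>n\<ge>1. \<forall>\<omega>. Xt n \<omega> \<in> (\<lambda>i. X i \<omega>) ` {..<n} \<and>
      (\<forall>i<n. dist (X n \<omega>) (Xt n \<omega>) \<le> dist (X n \<omega>) (X i \<omega>)))"

definition covering_number :: "real \<Rightarrow> 'a::metric_space set \<Rightarrow> nat" where
  "covering_number r A = Inf {card C | C. finite C \<and> A \<subseteq> (\<Union>c\<in>C. ball c r)}"

definition box_dim :: "'a::metric_space set \<Rightarrow> ereal" where
  "box_dim A = Limsup (at_right 0) (\<lambda>r. ereal (ln (real (covering_number r A)) / ln (1 / r)))"

definition expansion :: "'a::metric_space set \<Rightarrow> real \<Rightarrow> 'a set" where
  "expansion A r = (\<Union>x\<in>A. ball x r)"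

definition minkowski_content :: "'a::metric_space measure \<Rightarrow> 'a set \<Rightarrow> ereal" where
  "minkowski_content \<nu> A = Limsup (at_right 0)
      (\<lambda>r. ereal ((measure \<nu> (expansion A r) - measure \<nu> A) / r))"

end

(* Write d_n for the distance from X_n to its nearest earlier point Xt_n. In a length space an
   almost shortest path from X_n to Xt_n crosses the boundary of eta, so a mistake with d_n < r puts
   X_n within r of the boundary. Mistakes with d_n >= t are t-separated, because Xt_n is the nearest
   earlier point; those with t <= d_n < 2t also lie within 2t of the boundary, so by doubling there
   are at most 2^(3d) N_t(boundary) <= 2^(3d) t^(-beta) of them, and summing over the dyadic scales
   above r bounds the mistakes with d_n >= r by K0 + A r^(-beta).
   Take r_n = rho0 n^(-alpha). By smoothing and the Minkowski bound, X_n comes within r_n of the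
   boundary with probability O(n^(-alpha)); weighting these events by n^(-gamma), Markov's
   inequality bounds their number up to time N by K N^gamma off an event of probability p.
   With alpha = gamma / beta the packing term r_N^(-beta) is of order N^gamma as well, and for
   beta = b + c1/2 > b and gamma = (b + c1)/(b + 1) one has gamma + alpha > 1, as summability needs. *)

theory Submission
  imports Defs
begin

section \<open>Coverings and packings in doubling spaces\<close>

definition doubling_with :: "nat \<Rightarrow> 'a::metric_space itself \<Rightarrow> bool" where
  "doubling_with d _ \<longleftrightarrow>
     (\<forall>(x::'a) r. \<exists>C. finite C \<and> card C \<le> 2 ^ d \<and> ball x r \<subseteq> (\<Union>c\<in>C. ball c (r / 2)))"

lemma doubling_metric_iff: "doubling_metric TYPE('a::metric_space) \<longleftrightarrow> (\<exists>d. doubling_with d TYPE('a))"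
  unfolding doubling_metric_def doubling_with_def ..

lemma doubling_withD:
  fixes x :: "'a::metric_space"
  assumes "doubling_with d TYPE('a)"
  shows "\<exists>C. finite C \<and> card C \<le> 2 ^ d \<and> ball x r \<subseteq> (\<Union>c\<in>C. ball c (r / 2))"
  using assms by (simp add: doubling_with_def)

lemma doubling_with_ball_cover_iterate:
  fixes x :: "'a::metric_space"
  assumes dbl: "doubling_with d TYPE('a)"
  shows "\<exists>C. finite C \<and> card C \<le> 2 ^ (d * k) \<and> ball x R \<subseteq> (\<Union>c\<in>C. ball c (R / 2 ^ k))"
proof (induction k)
  case 0
  show ?case by (intro exI[of _ "{x}"]) auto
next
  case (Suc k)
  then obtain C where C: "finite C" "card C \<le> 2 ^ (d * k)"
    and cover: "ball x R \<subseteq> (\<Union>c\<in>C. ball c (R / 2 ^ k))" by blast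
  obtain D :: "'a \<Rightarrow> 'a set" where D: "\<And>c. finite (D c)" "\<And>c. card (D c) \<le> 2 ^ d"
    and Dcover: "\<And>c. ball c (R / 2 ^ k) \<subseteq> (\<Union>e\<in>D c. ball e (R / 2 ^ k / 2))"
    using doubling_withD[OF dbl, of _ "R / 2 ^ k"] by metis
  have "card (\<Union>c\<in>C. D c) \<le> (\<Sum>c\<in>C. card (D c))" by (rule card_UN_le[OF C(1)])
  also have "\<dots> \<le> card C * 2 ^ d" using D(2) sum_bounded_above[of C "\<lambda>c. card (D c)"] by simp
  also have "\<dots> \<le> 2 ^ (d * k) * 2 ^ d" using C(2) by simp
  also have "\<dots> = 2 ^ (d * Suc k)" by (simp add: power_add)
  finally have "card (\<Union>c\<in>C. D c) \<le> 2 ^ (d * Suc k)" .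
  moreover have "ball x R \<subseteq> (\<Union>e\<in>(\<Union>c\<in>C. D c). ball e (R / 2 ^ Suc k))"
  proof
    fix y assume "y \<in> ball x R"
    then obtain c where "c \<in> C" "y \<in> ball c (R / 2 ^ k)" using cover by blast
    moreover from this(2) have "y \<in> (\<Union>e\<in>D c. ball e (R / 2 ^ k / 2))" using Dcover by blast
    ultimately show "y \<in> (\<Union>e\<in>(\<Union>c\<in>C. D c). ball e (R / 2 ^ Suc k))"
      by (auto simp: mult.commute)
  qed
  ultimately show ?case using C(1) D(1) by blast
qed

lemma doubling_with_bounded_finite_cover:
  fixes S :: "'a::metric_space set"
  assumes dbl: "doubling_with d TYPE('a)" and "bounded S" and t: "t > 0"
  obtains C where "finite C" "S \<subseteq> (\<Union>c\<in>C. ball c t)"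
proof -
  obtain x R where R: "S \<subseteq> ball x R"
    using bounded_subset_ballD[OF \<open>bounded S\<close>] by blast
  obtain k :: nat where "R / t < 2 ^ k" using real_arch_pow[of 2 "R / t"] by auto
  then have Rk: "R / 2 ^ k \<le> t" using t by (simp add: field_simps)
  obtain C where C: "finite C" "ball x R \<subseteq> (\<Union>c\<in>C. ball c (R / 2 ^ k))"
    using doubling_with_ball_cover_iterate[OF dbl] by blast
  have "(\<Union>c\<in>C. ball c (R / 2 ^ k)) \<subseteq> (\<Union>c\<in>C. ball c t)"
    using Rk by (intro UN_mono) auto
  with R C show thesis by (intro that[of C]) auto
qed

definition separated :: "real \<Rightarrow> ('i \<Rightarrow> 'a::metric_space) \<Rightarrow> 'i set \<Rightarrow> bool" where
  "separated t f I \<longleftrightarrow> (\<forall>i\<in>I. \<forall>j\<in>I. i \<noteq> j \<longrightarrow> t \<le> dist (f i) (f j))"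

lemma separated_anti_mono:
  "separated t f I \<Longrightarrow> J \<subseteq> I \<Longrightarrow> s \<le> t \<Longrightarrow> separated s f J"
  unfolding separated_def by (meson order_trans subsetD)

lemma separated_card_le_cover:
  fixes f :: "'i \<Rightarrow> 'a::metric_space"
  assumes "finite C" and sep: "separated t f I" and cover: "f ` I \<subseteq> (\<Union>c\<in>C. ball c (t / 2))"
  shows "card I \<le> card C"
proof -
  have "\<exists>c. c \<in> C \<and> dist c (f i) < t / 2" if "i \<in> I" for i
  proof -
    from that cover have "f i \<in> (\<Union>c\<in>C. ball c (t / 2))" by blast
    then show ?thesis by (simp only: UN_iff mem_ball) blast
  qed
  then obtain g where g: "\<And>i. i \<in> I \<Longrightarrow> g i \<in> C \<and> dist (g i) (f i) < t / 2"
    by metis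
  have "inj_on g I"
  proof
    fix i j assume ij: "i \<in> I" "j \<in> I" "g i = g j"
    have "dist (f i) (f j) < t"
      using g[OF ij(1)] g[OF ij(2)] ij(3) dist_triangle_half_r[of "g i" "f i" t "f j"] by simp
    then show "i = j" using sep ij(1,2) unfolding separated_def by (meson not_le)
  qed
  with g \<open>finite C\<close> show ?thesis by (intro card_inj_on_le) auto
qed

lemma covering_number_obtain:
  fixes A :: "'a::metric_space set"
  assumes "finite C0" "A \<subseteq> (\<Union>c\<in>C0. ball c t)"
  obtains C where "finite C" "A \<subseteq> (\<Union>c\<in>C. ball c t)" "card C = covering_number t A"
proof -
  let ?S = "{card C | C. finite C \<and> A \<subseteq> (\<Union>c\<in>C. ball c t)}"
  have "?S \<noteq> {}" using assms by blast
  then have "Inf ?S \<in> ?S" by (rule Inf_nat_def1)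
  then show thesis using that unfolding covering_number_def by auto
qed

lemma separated_in_expansion_card_le:
  fixes f :: "'i \<Rightarrow> 'a::metric_space"
  assumes dbl: "doubling_with d TYPE('a)" and "bounded A" and t: "t > 0"
    and sep: "separated t f I" and near: "f ` I \<subseteq> expansion A (2 * t)"
  shows "card I \<le> 2 ^ (d * 3) * covering_number t A"
proof -
  obtain C0 where "finite C0" "A \<subseteq> (\<Union>c\<in>C0. ball c t)"
    using doubling_with_bounded_finite_cover[OF dbl \<open>bounded A\<close> t] .
  then obtain C where C: "finite C" "A \<subseteq> (\<Union>c\<in>C. ball c t)" "card C = covering_number t A"
    by (rule covering_number_obtain)
  \<comment> \<open>Points of the \<open>2t\<close>-expansion lie within \<open>3t\<close> of a centre in \<open>C\<close>, and three halvings bring \<open>3t\<close> below \<open>t/2\<close>.\<close>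
  obtain D :: "'a \<Rightarrow> 'a set" where D: "\<And>c. finite (D c)" "\<And>c. card (D c) \<le> 2 ^ (d * 3)"
    and Dcover: "\<And>c. ball c (3 * t) \<subseteq> (\<Union>e\<in>D c. ball e (3 * t / 2 ^ 3))"
    using doubling_with_ball_cover_iterate[OF dbl, where k = 3 and R = "3 * t"] by metis
  have "f ` I \<subseteq> (\<Union>e\<in>(\<Union>c\<in>C. D c). ball e (t / 2))"
  proof
    fix y assume "y \<in> f ` I"
    then obtain z where z: "z \<in> A" "dist z y < 2 * t"
      using near unfolding expansion_def by auto
    have "z \<in> (\<Union>c\<in>C. ball c t)" using C(2) z(1) by (rule subsetD)
    then obtain c where c: "c \<in> C" "dist c z < t" by auto
    have "y \<in> ball c (3 * t)" using dist_triangle[of c y z] c(2) z(2) by simp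
    then have "y \<in> (\<Union>e\<in>D c. ball e (3 * t / 2 ^ 3))" using Dcover[of c] by (rule rev_subsetD)
    then obtain e where "e \<in> D c" "dist e y < 3 * t / 2 ^ 3" by auto
    moreover have "3 * t / 2 ^ 3 < t / 2" using t by simp
    ultimately show "y \<in> (\<Union>e\<in>(\<Union>c\<in>C. D c). ball e (t / 2))" using c(1) by force
  qed
  then have "card I \<le> card (\<Union>c\<in>C. D c)"
    using C(1) D(1) sep by (intro separated_card_le_cover) simp_all
  also have "\<dots> \<le> (\<Sum>c\<in>C. card (D c))" by (rule card_UN_le[OF C(1)])
  also have "\<dots> \<le> card C * 2 ^ (d * 3)" using D(2) sum_bounded_above[of C "\<lambda>c. card (D c)"] by simp
  finally show ?thesis using C(3) by (simp add: mult.commute)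
qed

section \<open>Box-counting dimension and Minkowski content\<close>

lemma box_dim_less_imp_covering_bound:
  fixes A :: "'a::metric_space set"
  assumes "box_dim A < ereal \<beta>"
  obtains s0 where "s0 > 0" "\<And>t. 0 < t \<Longrightarrow> t < s0 \<Longrightarrow> real (covering_number t A) \<le> t powr (-\<beta>)"
proof -
  have "\<forall>\<^sub>F r in at_right 0. ereal (ln (real (covering_number r A)) / ln (1 / r)) < ereal \<beta>"
    using assms unfolding box_dim_def by (rule Limsup_lessD)
  then obtain s1 where "s1 > 0" and s1: "\<And>t. 0 < t \<Longrightarrow> t < s1 \<Longrightarrow> ln (real (covering_number t A)) / ln (1 / t) < \<beta>"
    unfolding eventually_at_right_field by auto
  show thesis
  proof (rule that[of "min s1 1"])
    fix t assume t: "0 < t" "t < min s1 1"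
    then have "ln (1 / t) > 0" by simp
    then have "ln (real (covering_number t A)) < \<beta> * ln (1 / t)"
      using s1[of t] t by (simp add: divide_less_eq)
    moreover have "t powr (-\<beta>) = exp (\<beta> * ln (1 / t))" using t by (simp add: powr_def ln_div)
    ultimately show "real (covering_number t A) \<le> t powr (-\<beta>)"
    proof (cases "covering_number t A = 0")
      case False
      then have "real (covering_number t A) = exp (ln (real (covering_number t A)))" by simp
      also have "\<dots> < exp (\<beta> * ln (1 / t))" using \<open>ln (real (covering_number t A)) < \<beta> * ln (1 / t)\<close> by simp
      finally show ?thesis using \<open>t powr (-\<beta>) = exp (\<beta> * ln (1 / t))\<close> by simp
    qed simp
  qed (use \<open>s1 > 0\<close> in simp)
qed

lemma minkowski_content_nonneg:
  assumes "measure \<nu> A = 0"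
  shows "minkowski_content \<nu> A \<ge> 0"
proof -
  have "\<forall>\<^sub>F r in at_right 0. ereal 0 \<le> ereal ((measure \<nu> (expansion A r) - measure \<nu> A) / r)"
    unfolding eventually_at_right_field using assms by (intro exI[of _ 1]) auto
  then show ?thesis unfolding minkowski_content_def zero_ereal_def by (intro le_Limsup) auto
qed

lemma minkowski_content_less_imp_bound:
  assumes "minkowski_content \<nu> A < ereal c" and "measure \<nu> A = 0"
  obtains r0 where "r0 > 0" "\<And>t. 0 < t \<Longrightarrow> t < r0 \<Longrightarrow> measure \<nu> (expansion A t) \<le> c * t"
proof -
  have "\<forall>\<^sub>F r in at_right 0. ereal ((measure \<nu> (expansion A r) - measure \<nu> A) / r) < ereal c"
    using assms(1) unfolding minkowski_content_def by (rule Limsup_lessD)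
  then obtain r0 where "r0 > 0" and r0: "\<And>t. 0 < t \<Longrightarrow> t < r0 \<Longrightarrow> measure \<nu> (expansion A t) / t < c"
    using assms(2) unfolding eventually_at_right_field by auto
  show thesis
  proof (rule that[OF \<open>r0 > 0\<close>])
    fix t assume "0 < t" "t < r0"
    then show "measure \<nu> (expansion A t) \<le> c * t" using r0 by (simp add: divide_less_eq less_imp_le)
  qed
qed

section \<open>Boundary crossings in length spaces\<close>

lemma path_len_ge_dist:
  fixes \<gamma> :: "real \<Rightarrow> 'a::metric_space"
  assumes "0 \<le> s" "s \<le> 1"
  shows "ereal (dist (\<gamma> 0) (\<gamma> s)) \<le> path_len \<gamma>"
proof -
  define t :: "nat \<Rightarrow> real" where "t i = (if i = 0 then 0 else if i = 1 then s else 1)" for i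
  have "(t, 2) \<in> {(t, n). t 0 = 0 \<and> t n = 1 \<and> (\<forall>i<n. t i \<le> t (Suc i))}"
    using assms by (auto simp: t_def less_2_cases_iff)
  then have "ereal (\<Sum>i<snd (t, 2::nat). dist (\<gamma> (fst (t, 2::nat) i)) (\<gamma> (fst (t, 2::nat) (Suc i))))
      \<le> path_len \<gamma>"
    unfolding path_len_def by (rule SUP_upper)
  also have "(\<Sum>i<snd (t, 2::nat). dist (\<gamma> (fst (t, 2::nat) i)) (\<gamma> (fst (t, 2::nat) (Suc i))))
      = dist (\<gamma> 0) (\<gamma> s) + dist (\<gamma> s) (\<gamma> 1)"
    by (simp add: t_def numeral_2_eq_2)
  finally show ?thesis by (rule order_trans[rotated]) simp
qed

lemma boundaryI:
  fixes \<eta> :: "'a::metric_space \<Rightarrow> 'b"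
  assumes "\<And>e. e > 0 \<Longrightarrow> \<exists>x'. \<eta> x' \<noteq> \<eta> z \<and> dist z x' < e"
  shows "z \<in> boundary \<eta>"
proof -
  have "margin \<eta> z \<le> 0"
  proof (rule ereal_le_epsilon2)
    fix e :: real assume "0 < e"
    then obtain x' where x': "\<eta> x' \<noteq> \<eta> z" "dist z x' < e" using assms by blast
    have "margin \<eta> z \<le> ereal (dist z x')" unfolding margin_def using x'(1) by (intro INF_lower) simp
    also have "\<dots> \<le> 0 + ereal e" using x'(2) by simp
    finally show "margin \<eta> z \<le> 0 + ereal e" .
  qed
  moreover have "0 \<le> margin \<eta> z" unfolding margin_def by (rule INF_greatest) simp
  ultimately have "margin \<eta> z = 0" by (rule order_antisym)
  then show ?thesis by (simp add: boundary_def)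
qed

lemma path_meets_boundary:
  fixes \<gamma> :: "real \<Rightarrow> 'a::metric_space" and \<eta> :: "'a \<Rightarrow> 'b"
  assumes cont: "continuous_on {0..1} \<gamma>" and change: "\<eta> (\<gamma> 0) \<noteq> \<eta> (\<gamma> 1)"
  obtains s where "s \<in> {0..1}" "\<gamma> s \<in> boundary \<eta>"
proof -
  define T where "T = {t\<in>{0..1}. \<eta> (\<gamma> t) \<noteq> \<eta> (\<gamma> 0)}"
  define s where "s = Inf T"
  have "1 \<in> T" using change by (simp add: T_def)
  have Tbdd: "bdd_below T" unfolding T_def by (rule bdd_belowI[of _ 0]) auto
  have s_le: "s \<le> t" if "t \<in> T" for t unfolding s_def by (rule cInf_lower[OF that Tbdd])
  have "0 \<le> s" unfolding s_def using \<open>1 \<in> T\<close> by (intro cInf_greatest) (auto simp: T_def)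
  then have s01: "s \<in> {0..1}" using s_le[OF \<open>1 \<in> T\<close>] by simp
  \<comment> \<open>\<open>\<gamma> s\<close> is the first crossing: \<open>\<eta> \<circ> \<gamma>\<close> still equals \<open>\<eta> (\<gamma> 0)\<close> just before \<open>s\<close> and changes arbitrarily close after it.\<close>
  have "\<exists>x'. \<eta> x' \<noteq> \<eta> (\<gamma> s) \<and> dist (\<gamma> s) x' < e" if "e > 0" for e
  proof -
    obtain d where d: "d > 0" "\<And>t. t \<in> {0..1} \<Longrightarrow> dist t s < d \<Longrightarrow> dist (\<gamma> t) (\<gamma> s) < e"
      using cont \<open>e > 0\<close> s01 unfolding continuous_on_iff by metis
    show ?thesis
    proof (cases "\<eta> (\<gamma> s) = \<eta> (\<gamma> 0)")
      case True
      have "Inf T < s + d" using d(1) by (simp add: s_def)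
      then obtain t where t: "t \<in> T" "t < s + d" using cInf_lessD[of T] \<open>1 \<in> T\<close> by blast
      then have "dist t s < d" using s_le[OF t(1)] by (simp add: dist_real_def)
      moreover have "t \<in> {0..1}" "\<eta> (\<gamma> t) \<noteq> \<eta> (\<gamma> s)" using t(1) True by (auto simp: T_def)
      ultimately show ?thesis using d(2) by (metis dist_commute)
    next
      case False
      then have "s > 0" using \<open>0 \<le> s\<close> by (cases "s = 0") auto
      define t where "t = max 0 (s - d / 2)"
      have t01: "t \<in> {0..1}" and "t < s" and "dist t s < d"
        using \<open>s > 0\<close> s01 d(1) by (auto simp: t_def dist_real_def)
      then have "t \<notin> T" using s_le not_le by blast
      with t01 False show ?thesis using d(2)[OF t01 \<open>dist t s < d\<close>]
        by (intro exI[of _ "\<gamma> t"]) (auto simp: T_def dist_commute)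
    qed
  qed
  then have "\<gamma> s \<in> boundary \<eta>" by (rule boundaryI)
  with s01 show thesis by (rule that)
qed

lemma length_space_near_boundary:
  fixes x y :: "'a::metric_space" and \<eta> :: "'a \<Rightarrow> 'b"
  assumes length: "length_space TYPE('a)" and "\<eta> x \<noteq> \<eta> y" and "dist x y < t"
  shows "x \<in> expansion (boundary \<eta>) t"
proof -
  let ?P = "{\<gamma>. continuous_on {0..1} \<gamma> \<and> \<gamma> 0 = x \<and> \<gamma> 1 = y}"
  have eq: "ereal (dist x y) = (INF \<gamma> \<in> ?P. path_len \<gamma>)"
    using length unfolding length_space_def by blast
  have "(INF \<gamma> \<in> ?P. path_len \<gamma>) < ereal t" unfolding eq[symmetric] using \<open>dist x y < t\<close> by simp
  then obtain \<gamma> where \<gamma>: "continuous_on {0..1} \<gamma>" "\<gamma> 0 = x" "\<gamma> 1 = y"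
    and len: "path_len \<gamma> < ereal t"
    unfolding INF_less_iff by blast
  obtain s where s: "s \<in> {0..1}" "\<gamma> s \<in> boundary \<eta>"
    using path_meets_boundary[OF \<gamma>(1)] \<gamma>(2,3) \<open>\<eta> x \<noteq> \<eta> y\<close> by metis
  have "ereal (dist x (\<gamma> s)) \<le> path_len \<gamma>" using path_len_ge_dist[of s \<gamma>] s(1) \<gamma>(2) by simp
  then have "ereal (dist x (\<gamma> s)) < ereal t" using len by (rule le_less_trans)
  then have "x \<in> ball (\<gamma> s) t" by (simp add: dist_commute)
  then show ?thesis using s(2) unfolding expansion_def by blast
qed

section \<open>Mistakes of nearest neighbour sequences\<close>

lemma halving_recursion_bound:
  fixes F :: "real \<Rightarrow> real"
  assumes s0: "s0 > 0" and A: "A \<ge> 0" and \<beta>: "\<beta> > 0"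
    and base: "\<And>t. t \<ge> s0 \<Longrightarrow> F t \<le> K"
    and step: "\<And>t. 0 < t \<Longrightarrow> t < s0 \<Longrightarrow> F t \<le> F (2 * t) + A * t powr (-\<beta>)"
    and t: "t > 0"
  shows "F t \<le> K + A * (2 powr \<beta> / (2 powr \<beta> - 1)) * t powr (-\<beta>)"
proof -
  define q where "q = (2::real) powr \<beta>"
  have q1: "q > 1" unfolding q_def using powr_less_mono[of 0 \<beta> 2] \<beta> by simp
  define A' where "A' = A * (q / (q - 1))"
  have "A' \<ge> 0" unfolding A'_def using A q1 by simp
  \<comment> \<open>\<open>A'\<close> is the fixed point of \<open>a \<mapsto> a / q + A\<close>, the sum of the geometric series along the halvings.\<close>
  have A'_fix: "A' / q + A = A'" unfolding A'_def using q1 by (simp add: field_simps)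
  have "\<forall>t. s0 / 2 ^ k \<le> t \<longrightarrow> F t \<le> K + A' * t powr (-\<beta>)" for k :: nat
  proof (induction k)
    case 0
    have "A' * t powr (-\<beta>) \<ge> 0" for t using \<open>A' \<ge> 0\<close> by simp
    then show ?case using base by (simp add: add_increasing2)
  next
    case (Suc k)
    show ?case
    proof (intro allI impI)
      fix t assume tk: "s0 / 2 ^ Suc k \<le> t"
      then have "t > 0" using s0 by (smt (verit) divide_pos_pos zero_less_power)
      show "F t \<le> K + A' * t powr (-\<beta>)"
      proof (cases "s0 / 2 ^ k \<le> t")
        case True
        then show ?thesis using Suc.IH by blast
      next
        case False
        then have "t < s0 / 2 ^ k" by simp
        also have "\<dots> \<le> s0" using s0 by (simp add: field_simps)
        finally have "t < s0" .
        have "s0 / 2 ^ k \<le> 2 * t" using tk by (simp add: field_simps)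
        then have IH: "F (2 * t) \<le> K + A' * (2 * t) powr (-\<beta>)" using Suc.IH by blast
        have "(2 * t) powr (-\<beta>) = t powr (-\<beta>) / q"
          using \<open>t > 0\<close> by (simp add: powr_mult powr_minus q_def divide_inverse)
        have "F t \<le> F (2 * t) + A * t powr (-\<beta>)" by (rule step[OF \<open>t > 0\<close> \<open>t < s0\<close>])
        also have "\<dots> \<le> K + (A' / q + A) * t powr (-\<beta>)"
          using IH \<open>(2 * t) powr (-\<beta>) = t powr (-\<beta>) / q\<close> by (simp add: algebra_simps)
        finally show ?thesis unfolding A'_fix .
      qed
    qed
  qed
  moreover obtain k :: nat where "s0 / t < 2 ^ k" using real_arch_pow[of 2 "s0 / t"] by auto
  then have "s0 / 2 ^ k \<le> t" using t by (simp add: field_simps)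
  ultimately show ?thesis unfolding A'_def q_def by blast
qed

definition far_mistakes ::
    "('a::metric_space \<Rightarrow> 'b) \<Rightarrow> (nat \<Rightarrow> 'a) \<Rightarrow> (nat \<Rightarrow> 'a) \<Rightarrow> nat \<Rightarrow> real \<Rightarrow> nat set" where
  "far_mistakes \<eta> x xt N t = {n\<in>{1..N}. \<eta> (x n) \<noteq> \<eta> (xt n) \<and> t \<le> dist (x n) (xt n)}"

lemma nearest_neighbour_separated:
  fixes x xt :: "nat \<Rightarrow> 'a::metric_space"
  assumes nn: "\<And>i n. i < n \<Longrightarrow> dist (x n) (xt n) \<le> dist (x n) (x i)"
  shows "separated t x {n. t \<le> dist (x n) (xt n)}"
  unfolding separated_def
proof (intro ballI impI)
  fix i j assume "i \<in> {n. t \<le> dist (x n) (xt n)}" "j \<in> {n. t \<le> dist (x n) (xt n)}" "i \<noteq> j"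
  then show "t \<le> dist (x i) (x j)"
    using nn[of i j] nn[of j i] by (cases "i < j") (auto simp: dist_commute)
qed

lemma far_mistakes_separated:
  fixes x xt :: "nat \<Rightarrow> 'a::metric_space"
  assumes "\<And>i n. i < n \<Longrightarrow> dist (x n) (xt n) \<le> dist (x n) (x i)"
  shows "separated t x (far_mistakes \<eta> x xt N t)"
  using nearest_neighbour_separated[OF assms] by (rule separated_anti_mono) (auto simp: far_mistakes_def)

lemma far_mistakes_halving_step:
  fixes x xt :: "nat \<Rightarrow> 'a::metric_space"
  assumes length: "length_space TYPE('a)" and dbl: "doubling_with d TYPE('a)"
    and "bounded (boundary \<eta>)" and t: "t > 0"
    and nn: "\<And>i n. i < n \<Longrightarrow> dist (x n) (xt n) \<le> dist (x n) (x i)"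
  shows "card (far_mistakes \<eta> x xt N t)
    \<le> card (far_mistakes \<eta> x xt N (2 * t)) + 2 ^ (d * 3) * covering_number t (boundary \<eta>)"
proof -
  define U where "U = {n \<in> far_mistakes \<eta> x xt N t. dist (x n) (xt n) < 2 * t}"
  have split: "far_mistakes \<eta> x xt N t \<subseteq> far_mistakes \<eta> x xt N (2 * t) \<union> U"
    unfolding U_def far_mistakes_def by auto
  have "card (far_mistakes \<eta> x xt N t) \<le> card (far_mistakes \<eta> x xt N (2 * t)) + card U"
    by (rule order.trans[OF card_mono[OF _ split] card_Un_le]) (simp add: far_mistakes_def U_def)
  moreover have "card U \<le> 2 ^ (d * 3) * covering_number t (boundary \<eta>)"
  proof (rule separated_in_expansion_card_le[OF dbl \<open>bounded (boundary \<eta>)\<close> t])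
    show "separated t x U"
      using far_mistakes_separated[where x = x and xt = xt, OF nn]
      by (rule separated_anti_mono) (auto simp: U_def)
    show "x ` U \<subseteq> expansion (boundary \<eta>) (2 * t)"
      using length_space_near_boundary[OF length] by (auto simp: U_def far_mistakes_def)
  qed
  ultimately show ?thesis by linarith
qed

lemma mistakes_near_boundary_or_far:
  fixes x xt :: "nat \<Rightarrow> 'a::metric_space"
  assumes length: "length_space TYPE('a)" and r: "\<And>n. n \<in> {1..N} \<Longrightarrow> r N \<le> r n"
  shows "{n\<in>{1..N}. \<eta> (x n) \<noteq> \<eta> (xt n)}
    \<subseteq> {n\<in>{1..N}. x n \<in> expansion (boundary \<eta>) (r n)} \<union> far_mistakes \<eta> x xt N (r N)"
proof
  fix n assume n: "n \<in> {n\<in>{1..N}. \<eta> (x n) \<noteq> \<eta> (xt n)}"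
  show "n \<in> {n\<in>{1..N}. x n \<in> expansion (boundary \<eta>) (r n)} \<union> far_mistakes \<eta> x xt N (r N)"
  proof (cases "dist (x n) (xt n) < r n")
    case True
    with n have "x n \<in> expansion (boundary \<eta>) (r n)"
      using length_space_near_boundary[OF length] by blast
    with n show ?thesis by blast
  next
    case False
    moreover have "r N \<le> r n" using n r by simp
    ultimately show ?thesis using n by (simp add: far_mistakes_def)
  qed
qed

lemma nearest_neighbour_mistakes_bound:
  fixes x xt :: "nat \<Rightarrow> 'a::metric_space" and r :: "nat \<Rightarrow> real"
  assumes length: "length_space TYPE('a)" and dbl: "doubling_with d TYPE('a)"
    and bdd: "bounded (boundary \<eta>)"
    and nn: "\<And>i n. i < n \<Longrightarrow> dist (x n) (xt n) \<le> dist (x n) (x i)"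
    and s0: "s0 > 0" and packing: "\<And>I. separated s0 x I \<Longrightarrow> card I \<le> K0"
    and \<beta>: "\<beta> > 0"
    and box: "\<And>t. 0 < t \<Longrightarrow> t < s0 \<Longrightarrow> real (covering_number t (boundary \<eta>)) \<le> t powr (-\<beta>)"
    and r: "r N > 0" "\<And>n. n \<in> {1..N} \<Longrightarrow> r N \<le> r n"
  shows "real (card {n\<in>{1..N}. \<eta> (x n) \<noteq> \<eta> (xt n)})
    \<le> real (card {n\<in>{1..N}. x n \<in> expansion (boundary \<eta>) (r n)}) + real K0
       + 2 ^ (d * 3) * (2 powr \<beta> / (2 powr \<beta> - 1)) * r N powr (-\<beta>)"
proof -
  define F where "F t = real (card (far_mistakes \<eta> x xt N t))" for t
  have sep: "separated t x (far_mistakes \<eta> x xt N t)" for t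
    using nn by (rule far_mistakes_separated)
  have base: "F t \<le> real K0" if "t \<ge> s0" for t
    using packing[OF separated_anti_mono[OF sep order_refl that]] unfolding F_def by simp
  have step: "F t \<le> F (2 * t) + 2 ^ (d * 3) * t powr (-\<beta>)" if "0 < t" "t < s0" for t
  proof -
    have "card (far_mistakes \<eta> x xt N t)
        \<le> card (far_mistakes \<eta> x xt N (2 * t)) + 2 ^ (d * 3) * covering_number t (boundary \<eta>)"
      using length dbl bdd \<open>0 < t\<close> nn by (rule far_mistakes_halving_step)
    from of_nat_mono[where 'a = real, OF this]
    have "F t \<le> F (2 * t) + 2 ^ (d * 3) * real (covering_number t (boundary \<eta>))"
      unfolding F_def by simp
    moreover have "2 ^ (d * 3) * real (covering_number t (boundary \<eta>)) \<le> 2 ^ (d * 3) * t powr (-\<beta>)"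
      using box[OF that] by (rule mult_left_mono) simp
    ultimately show ?thesis by linarith
  qed
  have far: "F (r N) \<le> real K0 + 2 ^ (d * 3) * (2 powr \<beta> / (2 powr \<beta> - 1)) * r N powr (-\<beta>)"
    using halving_recursion_bound[OF s0 _ \<beta> base step r(1)] by simp
  have split: "{n\<in>{1..N}. \<eta> (x n) \<noteq> \<eta> (xt n)}
      \<subseteq> {n\<in>{1..N}. x n \<in> expansion (boundary \<eta>) (r n)} \<union> far_mistakes \<eta> x xt N (r N)"
    using length r(2) by (rule mistakes_near_boundary_or_far)
  have "card {n\<in>{1..N}. \<eta> (x n) \<noteq> \<eta> (xt n)}
      \<le> card {n\<in>{1..N}. x n \<in> expansion (boundary \<eta>) (r n)} + card (far_mistakes \<eta> x xt N (r N))"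
    by (rule order.trans[OF card_mono[OF _ split] card_Un_le]) (simp add: far_mistakes_def)
  with far show ?thesis unfolding F_def by linarith
qed

lemma nearest_neighbour_mistakes_power_bound:
  fixes x xt :: "nat \<Rightarrow> 'a::metric_space"
  assumes length: "length_space TYPE('a)" and dbl: "doubling_with d TYPE('a)"
    and bdd: "bounded (boundary \<eta>)"
    and nn: "\<And>i n. i < n \<Longrightarrow> dist (x n) (xt n) \<le> dist (x n) (x i)"
    and s0: "s0 > 0" and packing: "\<And>I. separated s0 x I \<Longrightarrow> card I \<le> K0"
    and \<beta>: "\<beta> > 0"
    and box: "\<And>t. 0 < t \<Longrightarrow> t < s0 \<Longrightarrow> real (covering_number t (boundary \<eta>)) \<le> t powr (-\<beta>)"
    and \<alpha>: "\<alpha> > 0" and \<rho>0: "\<rho>0 > 0"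
  shows "real (card {n\<in>{1..N}. \<eta> (x n) \<noteq> \<eta> (xt n)})
    \<le> real (card {n\<in>{1..N}. x n \<in> expansion (boundary \<eta>) (\<rho>0 * real n powr (-\<alpha>))}) + real K0
       + 2 ^ (d * 3) * (2 powr \<beta> / (2 powr \<beta> - 1)) * \<rho>0 powr (-\<beta>) * real N powr (\<alpha> * \<beta>)"
proof (cases "N = 0")
  case True
  have "2 powr \<beta> > 1" using \<beta> by simp
  then show ?thesis using True by simp
next
  case False
  define r where "r n = \<rho>0 * real n powr (-\<alpha>)" for n
  have "r N powr (-\<beta>) = \<rho>0 powr (-\<beta>) * real N powr (\<alpha> * \<beta>)"
    unfolding r_def using \<rho>0 by (simp add: powr_mult powr_powr)
  moreover have "r N \<le> r n" if "n \<in> {1..N}" for n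
    unfolding r_def using that \<alpha> \<rho>0 by (auto intro: powr_mono2')
  moreover have "r N > 0" unfolding r_def using False \<rho>0 by simp
  ultimately show ?thesis
    using nearest_neighbour_mistakes_bound[OF length dbl bdd nn s0 packing \<beta> box, where r = r and N = N]
    unfolding r_def by (simp add: mult.assoc)
qed

lemma uniform_nearest_neighbour_mistakes_bound:
  fixes \<eta> :: "'a::metric_space \<Rightarrow> 'b"
  assumes bounded: "bounded (UNIV :: 'a set)" and length: "length_space TYPE('a)"
    and doubling: "doubling_metric TYPE('a)" and box_dim: "box_dim (boundary \<eta>) < ereal \<beta>"
    and \<beta>: "\<beta> > 0" and \<alpha>: "\<alpha> > 0" and \<rho>0: "\<rho>0 > 0"
  obtains A K0 where "A \<ge> 0"
    "\<And>x xt N. (\<And>i n. i < n \<Longrightarrow> dist (x n) (xt n) \<le> dist (x n) (x i)) \<Longrightarrow>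
      real (card {n\<in>{1..N}. \<eta> (x n) \<noteq> \<eta> (xt n)})
        \<le> real (card {n\<in>{1..N}. x n \<in> expansion (boundary \<eta>) (\<rho>0 * real n powr (-\<alpha>))}) + real K0
          + A * real N powr (\<alpha> * \<beta>)"
proof -
  obtain d where dbl: "doubling_with d TYPE('a)" using doubling doubling_metric_iff by blast
  obtain s0 where "s0 > 0"
    and box: "\<And>t. 0 < t \<Longrightarrow> t < s0 \<Longrightarrow> real (covering_number t (boundary \<eta>)) \<le> t powr (-\<beta>)"
    using box_dim_less_imp_covering_bound[OF box_dim] by blast
  obtain C where C: "finite C" "(UNIV :: 'a set) \<subseteq> (\<Union>c\<in>C. ball c (s0 / 2))"
    using doubling_with_bounded_finite_cover[OF dbl bounded, of "s0 / 2"] \<open>s0 > 0\<close> by auto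
  have packing: "card I \<le> card C" if "separated s0 f I" for I and f :: "nat \<Rightarrow> 'a"
    using C(1) that by (rule separated_card_le_cover) (use C(2) in blast)
  have "bounded (boundary \<eta>)" using bounded by (rule bounded_subset) simp
  moreover have "2 powr \<beta> > 1" using \<beta> by simp
  ultimately show thesis
    using nearest_neighbour_mistakes_power_bound[OF length dbl _ _ \<open>s0 > 0\<close> packing \<beta> box \<alpha> \<rho>0]
    by (intro that[of "2 ^ (d * 3) * (2 powr \<beta> / (2 powr \<beta> - 1)) * \<rho>0 powr (-\<beta>)" "card C"]) auto
qed

lemma nn_processD:
  assumes "nn_process X Xt" and "i < n"
  shows "dist (X n \<omega>) (Xt n \<omega>) \<le> dist (X n \<omega>) (X i \<omega>)"
  using assms unfolding nn_process_def by auto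

section \<open>Visits of a smoothed process\<close>

lemma past_algebra_subalgebra:
  assumes "\<And>i. X i \<in> measurable M \<nu>" and "sets \<nu> = sets borel"
  shows "subalgebra M (past_algebra M X n)"
proof -
  have gen: "{X i -` B \<inter> space M | i B. i < n \<and> B \<in> sets borel} \<subseteq> sets M"
    using assms by (auto intro: measurable_sets)
  then have "{X i -` B \<inter> space M | i B. i < n \<and> B \<in> sets borel} \<subseteq> Pow (space M)"
    using sets.sets_into_space by blast
  then show ?thesis
    unfolding subalgebra_def past_algebra_def using sets.sigma_sets_subset[OF gen] by simp
qed

lemma (in prob_space) smoothed_prob_le:
  assumes Xmeas: "\<And>i. X i \<in> measurable M \<nu>" and borel: "sets \<nu> = sets borel"
    and smooth: "smoothed M \<nu> \<sigma> X" and A: "A \<in> sets \<nu>"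
  shows "prob (X n -` A \<inter> space M) \<le> measure \<nu> A / \<sigma>"
proof -
  interpret finite_measure_subalgebra M "past_algebra M X n"
    by unfold_locales (rule past_algebra_subalgebra[OF Xmeas borel])
  define f :: "'a \<Rightarrow> real" where "f \<omega> = indicator A (X n \<omega>)" for \<omega>
  have "f \<in> borel_measurable M"
    unfolding f_def by (rule measurable_compose[OF Xmeas borel_measurable_indicator[OF A]])
  then have f: "integrable M f" by (intro integrable_const_bound[where B = 1]) (auto simp: f_def)
  have "prob (X n -` A \<inter> space M) = (\<integral>\<omega>. f \<omega> \<partial>M)"
    using measurable_sets[OF Xmeas A]
    by (simp add: f_def indicator_def[symmetric] indicator_vimage[symmetric] Int_commute)
  also have "\<dots> = (\<integral>\<omega>. real_cond_exp M (past_algebra M X n) f \<omega> \<partial>M)"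
    using real_cond_exp_int(2)[OF f] by simp
  also have "\<dots> \<le> (\<integral>\<omega>. measure \<nu> A / \<sigma> \<partial>M)"
    using smooth A unfolding smoothed_def f_def
    by (intro integral_mono_AE[OF real_cond_exp_int(1)[OF f[unfolded f_def]]]) auto
  also have "\<dots> = measure \<nu> A / \<sigma>" by (simp add: prob_space)
  finally show ?thesis .
qed

lemma (in prob_space) partial_sums_bounded_with_prob:
  fixes g :: "nat \<Rightarrow> 'a \<Rightarrow> real" and a :: "nat \<Rightarrow> real"
  assumes g: "\<And>i. g i \<in> borel_measurable M" "\<And>i \<omega>. g i \<omega> \<ge> 0"
    and g_int: "\<And>i. (\<integral>\<^sup>+\<omega>. ennreal (g i \<omega>) \<partial>M) \<le> ennreal (a i)"
    and a: "\<And>i. a i \<ge> 0" "summable a" and p: "p > 0"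
  shows "\<exists>E\<in>events. prob E \<ge> 1 - p \<and> (\<exists>K. \<forall>\<omega>\<in>E. \<forall>N. (\<Sum>i<N. g i \<omega>) \<le> K)"
proof -
  define W where "W \<omega> = (\<Sum>i. ennreal (g i \<omega>))" for \<omega>
  define K where "K = (suminf a + 1) / p"
  have "suminf a \<ge> 0" using a by (simp add: suminf_nonneg)
  then have "K > 0" unfolding K_def using p by simp
  have W: "W \<in> borel_measurable M" unfolding W_def using g(1) by measurable
  have "(\<integral>\<^sup>+\<omega>. W \<omega> \<partial>M) = (\<Sum>i. \<integral>\<^sup>+\<omega>. ennreal (g i \<omega>) \<partial>M)"
    unfolding W_def by (rule nn_integral_suminf) (use g(1) in measurable)
  also have "\<dots> \<le> (\<Sum>i. ennreal (a i))" by (intro suminf_le g_int) auto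
  also have "\<dots> = ennreal (suminf a)"
    by (rule suminf_ennreal_eq[OF a(1)]) (use a(2) in \<open>simp add: summable_sums\<close>)
  finally have "(\<integral>\<^sup>+\<omega>. W \<omega> \<partial>M) \<le> ennreal (suminf a)" .
  define S where "S = {\<omega>\<in>space M. ennreal K \<le> W \<omega>}"
  have S: "S \<in> events" unfolding S_def using W by measurable
  have "ennreal K * emeasure M S = (\<integral>\<^sup>+\<omega>. ennreal K * indicator S \<omega> \<partial>M)"
    by (rule nn_integral_cmult_indicator[OF S, symmetric])
  also have "\<dots> \<le> (\<integral>\<^sup>+\<omega>. W \<omega> \<partial>M)"
    by (rule nn_integral_mono) (auto simp: S_def indicator_def)
  also have "\<dots> \<le> ennreal (suminf a)" by fact
  finally have "K * prob S \<le> suminf a"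
    using \<open>suminf a \<ge> 0\<close> \<open>K > 0\<close> by (simp add: emeasure_eq_measure ennreal_mult''[symmetric])
  then have "prob S \<le> p * (suminf a / (suminf a + 1))"
    using \<open>K > 0\<close> p unfolding K_def by (simp add: field_simps)
  also have "\<dots> \<le> p" using p \<open>suminf a \<ge> 0\<close> by (intro mult_left_le) auto
  finally have "prob (space M - S) \<ge> 1 - p" using prob_compl[OF S] by simp
  moreover have "(\<Sum>i<N. g i \<omega>) \<le> K" if "\<omega> \<in> space M - S" for \<omega> N
  proof -
    have "ennreal (\<Sum>i<N. g i \<omega>) = (\<Sum>i<N. ennreal (g i \<omega>))" using g(2) by simp
    also have "\<dots> \<le> W \<omega>" unfolding W_def by (rule sum_le_suminf) auto
    also have "\<dots> < ennreal K" using that unfolding S_def by auto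
    finally show ?thesis using g(2) by (simp add: ennreal_less_iff sum_nonneg)
  qed
  ultimately show ?thesis using S by blast
qed

lemma card_le_powr_weighted_indicator_sum:
  fixes T :: "nat \<Rightarrow> 'a set"
  assumes "\<gamma> \<ge> 0"
  shows "real (card {n\<in>{1..N}. \<omega> \<in> T n})
    \<le> real N powr \<gamma> * (\<Sum>i<N. indicator (T (Suc i)) \<omega> * real (Suc i) powr (-\<gamma>))"
proof -
  have "real (card {n\<in>{1..N}. \<omega> \<in> T n}) = (\<Sum>n=1..N. indicator (T n) \<omega>)"
    by (simp add: indicator_def Int_def)
  also have "\<dots> \<le> (\<Sum>n=1..N. indicator (T n) \<omega> * (real N powr \<gamma> * real n powr (-\<gamma>)))"
  proof (intro sum_mono)
    fix n assume "n \<in> {1..N}"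
    then have "real n powr \<gamma> \<le> real N powr \<gamma>" and "real n > 0" using assms by (auto intro: powr_mono2)
    then have "1 \<le> real N powr \<gamma> * real n powr (-\<gamma>)" by (simp add: powr_minus field_simps)
    then show "indicator (T n) \<omega> \<le> indicator (T n) \<omega> * (real N powr \<gamma> * real n powr (-\<gamma>))"
      by (simp add: indicator_def)
  qed
  also have "\<dots> = (\<Sum>i<N. indicator (T (Suc i)) \<omega> * (real N powr \<gamma> * real (Suc i) powr (-\<gamma>)))"
    by (simp only: One_nat_def sum.atLeast1_atMost_eq)
  also have "\<dots> = real N powr \<gamma> * (\<Sum>i<N. indicator (T (Suc i)) \<omega> * real (Suc i) powr (-\<gamma>))"
    unfolding sum_distrib_left by (rule sum.cong) (simp_all add: ac_simps)
  finally show ?thesis .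
qed

lemma (in prob_space) event_counts_power_bound:
  fixes T :: "nat \<Rightarrow> 'a set"
  assumes T: "\<And>n. T n \<in> events"
    and prob_T: "\<And>n. n \<ge> 1 \<Longrightarrow> prob (T n) \<le> c * real n powr (-\<alpha>)"
    and \<gamma>: "\<gamma> \<ge> 0" "\<gamma> + \<alpha> > 1" and p: "p > 0"
  shows "\<exists>E\<in>events. prob E \<ge> 1 - p \<and>
    (\<exists>K. \<forall>\<omega>\<in>E. \<forall>N. real (card {n\<in>{1..N}. \<omega> \<in> T n}) \<le> K * real N powr \<gamma>)"
proof -
  \<comment> \<open>Weighting the \<open>n\<close>-th event by \<open>n powr -\<gamma>\<close> makes the expected total finite.\<close>
  define g where "g i \<omega> = indicator (T (Suc i)) \<omega> * real (Suc i) powr (-\<gamma>)" for i \<omega>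
  define a where "a i = c * real (Suc i) powr (-(\<gamma> + \<alpha>))" for i
  have "prob (T 1) \<le> c" using prob_T[of 1] by simp
  then have "c \<ge> 0" using measure_nonneg[of M "T 1"] by linarith
  have g_meas: "g i \<in> borel_measurable M" for i
    unfolding g_def using T by (intro borel_measurable_times borel_measurable_indicator) auto
  have g_int: "(\<integral>\<^sup>+\<omega>. ennreal (g i \<omega>) \<partial>M) \<le> ennreal (a i)" for i
  proof -
    have "(\<integral>\<^sup>+\<omega>. ennreal (g i \<omega>) \<partial>M) = (\<integral>\<^sup>+\<omega>. ennreal (real (Suc i) powr (-\<gamma>)) * indicator (T (Suc i)) \<omega> \<partial>M)"
      by (rule nn_integral_cong) (simp add: g_def indicator_def)
    also have "\<dots> = ennreal (real (Suc i) powr (-\<gamma>) * prob (T (Suc i)))"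
      using T by (simp add: nn_integral_cmult_indicator emeasure_eq_measure ennreal_mult)
    also have "\<dots> \<le> ennreal (real (Suc i) powr (-\<gamma>) * (c * real (Suc i) powr (-\<alpha>)))"
      using prob_T[of "Suc i"] by (intro ennreal_leI mult_left_mono) auto
    also have "\<dots> = ennreal (a i)" unfolding a_def by (simp add: powr_add[symmetric] algebra_simps)
    finally show ?thesis .
  qed
  have "summable (\<lambda>n. real n powr (-(\<gamma> + \<alpha>)))" using \<gamma>(2) by (simp add: summable_real_powr_iff)
  then have "summable a" unfolding a_def by (intro summable_mult) (subst summable_Suc_iff)
  moreover have "a i \<ge> 0" for i unfolding a_def using \<open>c \<ge> 0\<close> by simp
  ultimately obtain E K where E: "E \<in> events" "prob E \<ge> 1 - p"
    and K: "\<And>\<omega> N. \<omega> \<in> E \<Longrightarrow> (\<Sum>i<N. g i \<omega>) \<le> K"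
    using partial_sums_bounded_with_prob[OF g_meas _ g_int _ _ p] unfolding g_def by fastforce
  have "real (card {n\<in>{1..N}. \<omega> \<in> T n}) \<le> K * real N powr \<gamma>" if "\<omega> \<in> E" for \<omega> N
  proof -
    have "real (card {n\<in>{1..N}. \<omega> \<in> T n}) \<le> real N powr \<gamma> * (\<Sum>i<N. g i \<omega>)"
      unfolding g_def using \<gamma>(1) by (rule card_le_powr_weighted_indicator_sum)
    also have "\<dots> \<le> real N powr \<gamma> * K" using K[OF that] by (intro mult_left_mono) auto
    finally show ?thesis by (simp add: mult.commute)
  qed
  with E show ?thesis by blast
qed

lemma (in prob_space) smoothed_visits_power_bound:
  assumes Xmeas: "\<And>i. X i \<in> measurable M \<nu>" and borel: "sets \<nu> = sets borel"
    and smooth: "smoothed M \<nu> \<sigma> X" and "\<sigma> > 0"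
    and S: "\<And>n. S n \<in> sets \<nu>" and S_small: "\<And>n. n \<ge> 1 \<Longrightarrow> measure \<nu> (S n) \<le> c * real n powr (-\<alpha>)"
    and \<gamma>: "\<gamma> \<ge> 0" "\<gamma> + \<alpha> > 1" and p: "p > 0"
  shows "\<exists>E\<in>events. prob E \<ge> 1 - p \<and>
    (\<exists>K. \<forall>\<omega>\<in>E. \<forall>N. real (card {n\<in>{1..N}. X n \<omega> \<in> S n}) \<le> K * real N powr \<gamma>)"
proof -
  define T where "T n = X n -` S n \<inter> space M" for n
  have "prob (T n) \<le> c / \<sigma> * real n powr (-\<alpha>)" if "n \<ge> 1" for n
  proof -
    have "prob (T n) \<le> measure \<nu> (S n) / \<sigma>"
      unfolding T_def by (rule smoothed_prob_le[OF Xmeas borel smooth S])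
    also have "\<dots> \<le> c * real n powr (-\<alpha>) / \<sigma>"
      using S_small[OF that] \<open>\<sigma> > 0\<close> by (simp add: divide_right_mono)
    finally show ?thesis by simp
  qed
  moreover have "T n \<in> events" for n unfolding T_def using Xmeas S by (rule measurable_sets)
  ultimately obtain E K where E: "E \<in> events" "prob E \<ge> 1 - p"
    and K: "\<forall>\<omega>\<in>E. \<forall>N. real (card {n\<in>{1..N}. \<omega> \<in> T n}) \<le> K * real N powr \<gamma>"
    using event_counts_power_bound[of T "c / \<sigma>" \<alpha> \<gamma> p] \<gamma> p by blast
  have "{n\<in>{1..N}. \<omega> \<in> T n} = {n\<in>{1..N}. X n \<omega> \<in> S n}" if "\<omega> \<in> E" for \<omega> N
    using sets.sets_into_space[OF E(1)] that unfolding T_def by auto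
  with K have "\<forall>\<omega>\<in>E. \<forall>N. real (card {n\<in>{1..N}. X n \<omega> \<in> S n}) \<le> K * real N powr \<gamma>" by simp
  with E show ?thesis by blast
qed

lemma (in prob_space) smoothed_expansion_visits_bound:
  assumes Xmeas: "\<And>i. X i \<in> measurable M \<nu>" and borel: "sets \<nu> = sets borel"
    and smooth: "smoothed M \<nu> \<sigma> X" and "\<sigma> > 0"
    and thin: "\<And>t. 0 < t \<Longrightarrow> t < r0 \<Longrightarrow> measure \<nu> (expansion B t) \<le> c * t"
    and \<rho>0: "0 < \<rho>0" "\<rho>0 < r0" and \<alpha>: "\<alpha> > 0" and \<gamma>: "\<gamma> \<ge> 0" "\<gamma> + \<alpha> > 1" and p: "p > 0"
  obtains E K where "E \<in> events" "prob E \<ge> 1 - p"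
    "\<And>\<omega> N. \<omega> \<in> E \<Longrightarrow>
      real (card {n\<in>{1..N}. X n \<omega> \<in> expansion B (\<rho>0 * real n powr (-\<alpha>))}) \<le> K * real N powr \<gamma>"
proof -
  have "measure \<nu> (expansion B (\<rho>0 * real n powr (-\<alpha>))) \<le> c * \<rho>0 * real n powr (-\<alpha>)"
    if "n \<ge> 1" for n
  proof -
    have "real n powr (-\<alpha>) \<le> 1" using that \<alpha> by (simp add: powr_minus_divide ge_one_powr_ge_zero)
    then have "\<rho>0 * real n powr (-\<alpha>) < r0" using \<rho>0 by (smt (verit) mult_left_le)
    then show ?thesis using thin[of "\<rho>0 * real n powr (-\<alpha>)"] that \<rho>0 by (simp add: mult.assoc)
  qed
  moreover have "expansion B t \<in> sets \<nu>" for t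
    unfolding borel expansion_def by (intro borel_open open_UN) auto
  ultimately have "\<exists>E\<in>events. prob E \<ge> 1 - p \<and> (\<exists>K. \<forall>\<omega>\<in>E. \<forall>N.
      real (card {n\<in>{1..N}. X n \<omega> \<in> expansion B (\<rho>0 * real n powr (-\<alpha>))}) \<le> K * real N powr \<gamma>)"
    using \<gamma> p by (intro smoothed_visits_power_bound[OF Xmeas borel smooth \<open>\<sigma> > 0\<close>]) auto
  then show thesis using that by blast
qed

lemma (in prob_space) nearest_neighbour_mistakes_rate:
  fixes X :: "nat \<Rightarrow> 'a \<Rightarrow> 'b::metric_space" and \<eta> :: "'b \<Rightarrow> 'c"
  assumes bounded: "bounded (UNIV :: 'b set)" and length: "length_space TYPE('b)"
    and doubling: "doubling_metric TYPE('b)"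
    and Xmeas: "\<And>i. X i \<in> measurable M \<nu>" and borel: "sets \<nu> = sets borel"
    and smooth: "smoothed M \<nu> \<sigma> X" and "\<sigma> > 0"
    and box_dim: "box_dim (boundary \<eta>) < ereal \<beta>" and "\<beta> > 0"
    and thin: "\<And>t. 0 < t \<Longrightarrow> t < r0 \<Longrightarrow> measure \<nu> (expansion (boundary \<eta>) t) \<le> c * t" and "r0 > 0"
    and "\<alpha> > 0" "\<alpha> * \<beta> + \<alpha> > 1" and "p > 0"
  shows "\<exists>E\<in>events. prob E \<ge> 1 - p \<and> (\<exists>K0::nat. \<exists>C\<ge>0. \<forall>Xt \<omega> N. nn_process X Xt \<longrightarrow> \<omega> \<in> E \<longrightarrow>
      (\<Sum>n=1..N. if \<eta> (X n \<omega>) \<noteq> \<eta> (Xt n \<omega>) then 1 else 0 :: real) \<le> real K0 + C * real N powr (\<alpha> * \<beta>))"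
proof -
  define \<rho>0 where "\<rho>0 = r0 / 2"
  have "\<rho>0 > 0" "\<rho>0 < r0" unfolding \<rho>0_def using \<open>r0 > 0\<close> by auto
  obtain A K0 where "A \<ge> 0" and mistakes: "\<And>x xt N. (\<And>i n. i < n \<Longrightarrow> dist (x n) (xt n) \<le> dist (x n) (x i)) \<Longrightarrow>
      real (card {n\<in>{1..N}. \<eta> (x n) \<noteq> \<eta> (xt n)})
        \<le> real (card {n\<in>{1..N}. x n \<in> expansion (boundary \<eta>) (\<rho>0 * real n powr (-\<alpha>))}) + real K0
          + A * real N powr (\<alpha> * \<beta>)"
    using uniform_nearest_neighbour_mistakes_bound[OF bounded length doubling box_dim
        \<open>\<beta> > 0\<close> \<open>\<alpha> > 0\<close> \<open>\<rho>0 > 0\<close>] by blast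
  obtain E K where E: "E \<in> events" "prob E \<ge> 1 - p" and visits: "\<And>\<omega> N. \<omega> \<in> E \<Longrightarrow>
      real (card {n\<in>{1..N}. X n \<omega> \<in> expansion (boundary \<eta>) (\<rho>0 * real n powr (-\<alpha>))})
        \<le> K * real N powr (\<alpha> * \<beta>)"
    using smoothed_expansion_visits_bound[OF Xmeas borel smooth \<open>\<sigma> > 0\<close> thin \<open>\<rho>0 > 0\<close> \<open>\<rho>0 < r0\<close>
        \<open>\<alpha> > 0\<close> _ \<open>\<alpha> * \<beta> + \<alpha> > 1\<close> \<open>p > 0\<close>] \<open>\<alpha> > 0\<close> \<open>\<beta> > 0\<close> by auto
  have "(\<Sum>n=1..N. if \<eta> (X n \<omega>) \<noteq> \<eta> (Xt n \<omega>) then 1 else 0 :: real)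
      \<le> real K0 + (max K 0 + A) * real N powr (\<alpha> * \<beta>)"
    if "nn_process X Xt" "\<omega> \<in> E" for Xt \<omega> N
  proof -
    have nn: "\<And>i n. i < n \<Longrightarrow> dist (X n \<omega>) (Xt n \<omega>) \<le> dist (X n \<omega>) (X i \<omega>)"
      using that(1) by (rule nn_processD)
    have "(\<Sum>n=1..N. if \<eta> (X n \<omega>) \<noteq> \<eta> (Xt n \<omega>) then 1 else 0 :: real)
        = real (card {n\<in>{1..N}. \<eta> (X n \<omega>) \<noteq> \<eta> (Xt n \<omega>)})"
      by (simp add: sum.If_cases Int_def)
    also have "\<dots> \<le> real (card {n\<in>{1..N}. X n \<omega> \<in> expansion (boundary \<eta>) (\<rho>0 * real n powr (-\<alpha>))})
        + real K0 + A * real N powr (\<alpha> * \<beta>)"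
      using nn by (rule mistakes)
    also have "\<dots> \<le> real K0 + (max K 0 + A) * real N powr (\<alpha> * \<beta>)"
      using visits[OF that(2), of N] mult_right_mono[of K "max K 0" "real N powr (\<alpha> * \<beta>)"]
      by (simp add: algebra_simps)
    finally show ?thesis .
  qed
  moreover have "max K 0 + A \<ge> 0" using \<open>A \<ge> 0\<close> by simp
  ultimately show ?thesis using E by blast
qed

lemma rate_exponent_gap:
  fixes b c :: real
  assumes "b \<ge> 0" "c > 0"
  shows "(b + c) / (b + 1) + (b + c) / (b + 1) / (b + c / 2) > 1"
proof -
  define \<beta> where "\<beta> = b + c / 2"
  have pos: "\<beta> > 0" "b + 1 > 0" using assms unfolding \<beta>_def by linarith+
  have "(b + c) * (\<beta> + 1) = \<beta> * (b + 1) + c * (1 + c + 2 * b) / 2"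
    unfolding \<beta>_def by (simp add: algebra_simps add_divide_distrib)
  moreover have "0 < c * (1 + c + 2 * b)" using assms by simp
  ultimately have "\<beta> * (b + 1) < (b + c) * (\<beta> + 1)" by linarith
  then have "1 < (b + c) * (\<beta> + 1) / ((b + 1) * \<beta>)" using pos by (simp add: mult.commute)
  also have "\<dots> = (b + c) / (b + 1) + (b + c) / (b + 1) / \<beta>"
    using pos by (simp add: distrib_left add_divide_distrib divide_divide_eq_left)
  finally show ?thesis unfolding \<beta>_def .
qed

lemma powr_rescale_le:
  fixes A L x \<gamma> :: real
  assumes "A \<ge> 0" "L > 0" "x \<ge> 0"
  shows "A * x powr \<gamma> \<le> (A / L powr \<gamma> + 1) * (L * x) powr \<gamma>"
proof -
  have "(A / L powr \<gamma> + 1) * (L * x) powr \<gamma> = A * x powr \<gamma> + (L * x) powr \<gamma>"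
    using assms by (simp add: powr_mult field_simps)
  then show ?thesis by simp
qed

theorem theorem9:
  fixes \<nu> :: "'a::metric_space measure" and M :: "'w measure"
    and \<eta> :: "'a \<Rightarrow> 'b" and X :: "nat \<Rightarrow> 'w \<Rightarrow> 'a"
    and \<sigma> b m c1 c2 p :: real
  assumes bounded: "bounded (UNIV :: 'a set)"
    and length: "length_space TYPE('a)"
    and doubling: "doubling_metric TYPE('a)"
    and borel: "sets \<nu> = sets borel"
    and finite: "finite_measure \<nu>"
    and eta: "\<eta> \<in> F0 \<nu>"
    and prob: "prob_space M"
    and Xmeas: "\<And>n. X n \<in> measurable M \<nu>"
    and sigma_pos: "\<sigma> > 0"
    and smooth: "smoothed M \<nu> \<sigma> X"
    and bdim: "box_dim (boundary \<eta>) = ereal b" and b_gt: "b > 1"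
    and mink: "minkowski_content \<nu> (boundary \<eta>) = ereal m"
    and c_pos: "c1 > 0" "c2 > 0" "p > 0"
  shows "\<exists>C0 C1. C0 > 0 \<and> C1 > 0 \<and>
    (\<forall>Xt. nn_process X Xt \<longrightarrow>
      (\<exists>E \<in> sets M. measure M E \<ge> 1 - p \<and>
        (\<forall>\<omega>\<in>E. \<forall>N::nat.
          (\<Sum>n=1..N. if \<eta> (X n \<omega>) \<noteq> \<eta> (Xt n \<omega>) then 1 else 0 :: real)
            \<le> C0 + C1 * ((m + c2) * real N / \<sigma>) powr ((b + c1) / (b + 1)))))"
proof -
  interpret prob_space M by (rule prob)
  have B0: "measure \<nu> (boundary \<eta>) = 0" using eta by (simp add: F0_def measure_eq_0_null_sets)
  obtain r0 where "r0 > 0"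
    and thin: "\<And>t. 0 < t \<Longrightarrow> t < r0 \<Longrightarrow> measure \<nu> (expansion (boundary \<eta>) t) \<le> (m + c2) * t"
    using minkowski_content_less_imp_bound[of \<nu> "boundary \<eta>" "m + c2"] mink c_pos(2) B0 by auto
  \<comment> \<open>\<open>\<alpha> = \<gamma> / \<beta>\<close> makes the packing term at radius \<open>N powr -\<alpha>\<close> of order \<open>N powr \<gamma>\<close>.\<close>
  define \<beta> where "\<beta> = b + c1 / 2"
  define \<gamma> where "\<gamma> = (b + c1) / (b + 1)"
  define \<alpha> where "\<alpha> = \<gamma> / \<beta>"
  have "\<beta> > 0" "\<alpha> > 0" "box_dim (boundary \<eta>) < ereal \<beta>"
    using b_gt c_pos bdim unfolding \<alpha>_def \<beta>_def \<gamma>_def by auto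
  then have "\<alpha> * \<beta> = \<gamma>" unfolding \<alpha>_def by simp
  have "\<alpha> * \<beta> + \<alpha> > 1"
    using rate_exponent_gap[of b c1] b_gt c_pos(1) \<open>\<alpha> * \<beta> = \<gamma>\<close> unfolding \<gamma>_def \<alpha>_def \<beta>_def by simp
  obtain E K0 C where E: "E \<in> events" "prob E \<ge> 1 - p" and "C \<ge> 0"
    and mistakes: "\<forall>Xt \<omega> N. nn_process X Xt \<longrightarrow> \<omega> \<in> E \<longrightarrow>
      (\<Sum>n=1..N. if \<eta> (X n \<omega>) \<noteq> \<eta> (Xt n \<omega>) then 1 else 0 :: real) \<le> real K0 + C * real N powr (\<alpha> * \<beta>)"
    using nearest_neighbour_mistakes_rate[OF bounded length doubling Xmeas borel smooth sigma_pos
        \<open>box_dim (boundary \<eta>) < ereal \<beta>\<close> \<open>\<beta> > 0\<close> thin \<open>r0 > 0\<close> \<open>\<alpha> > 0\<close> \<open>\<alpha> * \<beta> + \<alpha> > 1\<close> c_pos(3)]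
    by blast
  define L where "L = (m + c2) / \<sigma>"
  have "m \<ge> 0" using minkowski_content_nonneg[OF B0] mink by simp
  then have "L > 0" unfolding L_def using c_pos(2) sigma_pos by simp
  define C1 where "C1 = C / L powr \<gamma> + 1"
  have "C1 > 0" unfolding C1_def using \<open>C \<ge> 0\<close> \<open>L > 0\<close> by (simp add: add_nonneg_pos)
  have rescale: "real K0 + C * real N powr (\<alpha> * \<beta>) \<le> real K0 + 1 + C1 * ((m + c2) * real N / \<sigma>) powr \<gamma>"
    for N
  proof -
    have eq: "(m + c2) * real N / \<sigma> = L * real N" unfolding L_def by simp
    show ?thesis unfolding eq \<open>\<alpha> * \<beta> = \<gamma>\<close> C1_def
      using powr_rescale_le[OF \<open>C \<ge> 0\<close> \<open>L > 0\<close> of_nat_0_le_iff[of N], where \<gamma> = \<gamma>] by linarith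
  qed
  have bound: "(\<Sum>n=1..N. if \<eta> (X n \<omega>) \<noteq> \<eta> (Xt n \<omega>) then 1 else 0 :: real)
      \<le> real K0 + 1 + C1 * ((m + c2) * real N / \<sigma>) powr \<gamma>" if "nn_process X Xt" "\<omega> \<in> E" for Xt \<omega> N
    by (rule order_trans[OF mistakes[rule_format, OF that] rescale])
  show ?thesis
    by (rule exI[of _ "real K0 + 1"], rule exI[of _ C1]) (use E \<open>C1 > 0\<close> bound[unfolded \<gamma>_def] in auto)
qed

end
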